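(* If $\bar x\in\operatorname{dom}\varphi$ is a local minimizer of $\varphi:\mathbb{R}^n\to(-\infty,\infty]$, then $0\in\partial\varphi(\bar x)$. If in addition $\varphi$ is prox-regular at $\bar x$ for $0$, then $$\langle z,w\rangle\ge0\quad\text{whenever } w\in\mathbb{R}^n \text{ and } z\in\breve\partial^2\varphi(\bar x,0)(w).$$
   Context: Regular subdifferential $\widehat\partial\varphi(x):=\{v:\liminf_{u\to x}\frac{\varphi(u)-\varphi(x)-\langle v,u-x\rangle}{\|u-x\|}\ge0\}$; limiting subdifferential $\partial\varphi(\bar x)$: all limits of $v_k\in\widehat\partial\varphi(x_k)$ with $x_k\to\bar x$, $\varphi(x_k)\to\varphi(\bar x)$. Regular normal cone $\widehat N_\Omega(\bar z):=\widehat\partial\delta_\Omega(\bar z)$ ($\delta_\Omega$ the indicator function). Regular coderivative of $F:\mathbb{R}^n\rightrightarrows\mathbb{R}^m$: $\widehat D^*F(\bar x,\bar y)(u):=\{v:(v,-u)\in\widehat N_{\operatorname{gph}F}(\bar x,\bar y)\}$. Combined second-order subdifferential: $\breve\partial^2\varphi(\bar x,\bar v)(u):=\widehat D^*(\partial\varphi)(\bar x,\bar v)(u)$. Prox-regularity of $\varphi$ at $\bar x$ for $\bar v\in\partial\varphi(\bar x)$: $\varphi$ finite and locally l.s.c. around $\bar x$, and there are $\varepsilon>0$, $r\ge0$ with $\varphi(x)\ge\varphi(u)+\langle v,x-u\rangle-\frac r2\|x-u\|^2$ for all $\|x-\bar x\|<\varepsilon$ and all $v\in\partial\varphi(u)$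 with $\|v-\bar v\|<\varepsilon$, $\|u-\bar x\|<\varepsilon$, $\varphi(u)<\varphi(\bar x)+\varepsilon$. *)

theory Defs
  imports "HOL-Analysis.Analysis"
begin

definition edom :: "('a \<Rightarrow> ereal) \<Rightarrow> 'a set" where
  "edom \<phi> = {x. \<phi> x < \<infinity>}"

definition local_minimizer :: "('a::metric_space \<Rightarrow> ereal) \<Rightarrow> 'a \<Rightarrow> bool" where
  "local_minimizer \<phi> xb \<longleftrightarrow> (\<exists>\<epsilon>>0. \<forall>x. dist x xb < \<epsilon> \<longrightarrow> \<phi> xb \<le> \<phi> x)"

definition regular_subdiff :: "('a::real_inner \<Rightarrow> ereal) \<Rightarrow> 'a \<Rightarrow> 'a set" where
  "regular_subdiff \<phi> x = {v. \<bar>\<phi> x\<bar> \<noteq> \<infinity> \<and>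
     Liminf (at x) (\<lambda>u. (\<phi> u - \<phi> x - ereal (inner v (u - x))) / ereal (norm (u - x))) \<ge> 0}"

definition lim_subdiff :: "('a::real_inner \<Rightarrow> ereal) \<Rightarrow> 'a \<Rightarrow> 'a set" where
  "lim_subdiff \<phi> xb = {v. \<bar>\<phi> xb\<bar> \<noteq> \<infinity> \<and>
     (\<exists>xs vs. xs \<longlonglongrightarrow> xb \<and> (\<lambda>k. \<phi> (xs k)) \<longlonglongrightarrow> \<phi> xb \<and>
        (\<forall>k. vs k \<in> regular_subdiff \<phi> (xs k)) \<and> vs \<longlonglongrightarrow> v)}"

definition indicator_fun :: "'a set \<Rightarrow> 'a \<Rightarrow> ereal" where
  "indicator_fun \<Omega> z = (if z \<in> \<Omega> then 0 else \<infinity>)"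

definition regular_normal_cone :: "'a::real_inner set \<Rightarrow> 'a \<Rightarrow> 'a set" where
  "regular_normal_cone \<Omega> z = regular_subdiff (indicator_fun \<Omega>) z"

definition graph_of :: "('a \<Rightarrow> 'b set) \<Rightarrow> ('a \<times> 'b) set" where
  "graph_of F = {(x, y). y \<in> F x}"

definition regular_coderiv ::
  "('a::real_inner \<Rightarrow> 'b::real_inner set) \<Rightarrow> 'a \<Rightarrow> 'b \<Rightarrow> 'b \<Rightarrow> 'a set" where
  "regular_coderiv F x y u = {v. (v, - u) \<in> regular_normal_cone (graph_of F) (x, y)}"

definition combined_second_subdiff ::
  "('a::real_inner \<Rightarrow> ereal) \<Rightarrow> 'a \<Rightarrow> 'a \<Rightarrow> 'a \<Rightarrow> 'a set" where
  "combined_second_subdiff \<phi> x v u = regular_coderiv (lim_subdiff \<phi>) x v u"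

text \<open>Local lower semicontinuity at \<open>xb\<close> (Rockafellar--Wets): the epigraph is closed
  relative to a neighbourhood of \<open>(xb, \<phi> xb)\<close>.\<close>
definition locally_lsc_at :: "('a::real_normed_vector \<Rightarrow> ereal) \<Rightarrow> 'a \<Rightarrow> bool" where
  "locally_lsc_at \<phi> xb \<longleftrightarrow> (\<exists>\<epsilon>>0.
     closed {(x, \<alpha>::real). dist x xb \<le> \<epsilon> \<and> \<alpha> \<le> real_of_ereal (\<phi> xb) + \<epsilon> \<and> \<phi> x \<le> ereal \<alpha>})"

definition prox_regular_at :: "('a::real_inner \<Rightarrow> ereal) \<Rightarrow> 'a \<Rightarrow> 'a \<Rightarrow> bool" where
  "prox_regular_at \<phi> xb vb \<longleftrightarrow> \<bar>\<phi> xb\<bar> \<noteq> \<infinity> \<and> locally_lsc_at \<phi> xb \<and>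
     (\<exists>\<epsilon>>0. \<exists>r\<ge>0. \<forall>x u v. norm (x - xb) < \<epsilon> \<and> v \<in> lim_subdiff \<phi> u \<and>
        norm (v - vb) < \<epsilon> \<and> norm (u - xb) < \<epsilon> \<and> \<phi> u < \<phi> xb + ereal \<epsilon> \<longrightarrow>
        \<phi> x \<ge> \<phi> u + ereal (inner v (x - u)) - ereal (r / 2 * (norm (x - u))\<^sup>2))"

end

theory Submission imports Defs begin

text \<open>The first claim is Fermat's rule. For the second, suppose \<open>\<langle>z, w\<rangle> < 0\<close> and pick
  \<open>\<lambda> > 0\<close> with \<open>\<parallel>z + \<lambda>w\<parallel> < \<parallel>z\<parallel>\<close>. For small \<open>t > 0\<close> let \<open>y = x\<^sub>0 + t z\<close> and minimise
  \<open>\<phi> + \<lambda>/2 \<parallel>\<cdot> - y\<parallel>\<^sup>2\<close> near \<open>x\<^sub>0\<close>; local lower semicontinuity gives a minimiser \<open>u\<close>, and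
  \<open>v = \<lambda>(y - u)\<close> is then a regular subgradient of \<open>\<phi>\<close> at \<open>u\<close>, so \<open>(u, v)\<close> lies on the graph
  of \<open>\<partial>\<phi>\<close>. Since \<open>\<parallel>u - y\<parallel> \<le> t\<parallel>z\<parallel>\<close>, the pair \<open>(u - x\<^sub>0, v)\<close> has length \<open>O(t)\<close> while
  \<open>\<langle>z, u - x\<^sub>0\<rangle> - \<langle>w, v\<rangle> \<ge> t\<parallel>z\<parallel> (\<parallel>z\<parallel> - \<parallel>z + \<lambda>w\<parallel>)\<close>, which contradicts
  \<open>(z, -w)\<close> being a regular normal to the graph at \<open>(x\<^sub>0, 0)\<close>.\<close>

lemma regular_subdiff_if_quadratic_minorant:
  fixes \<phi> :: "'a::real_inner \<Rightarrow> ereal"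
  assumes fin: "\<phi> u = ereal c" and "\<rho> > 0" and "L \<ge> 0"
    and minorant: "\<And>x. dist x u < \<rho> \<Longrightarrow> \<phi> x \<ge> ereal (c + inner v (x - u) - L * (norm (x - u))\<^sup>2)"
  shows "v \<in> regular_subdiff \<phi> u"
proof -
  have "0 \<le> Liminf (at u) (\<lambda>x. (\<phi> x - \<phi> u - ereal (inner v (x - u))) / ereal (norm (x - u)))"
  proof (subst le_Liminf_iff, intro allI impI)
    fix y :: ereal assume "y < 0"
    obtain e where e: "e > 0" "y < ereal (- e)"
    proof (cases y)
      case (real r) then show ?thesis using \<open>y < 0\<close> that[of "- r / 2"] by auto
    qed (use \<open>y < 0\<close> that[of 1] in auto)
    show "eventually (\<lambda>x. y < (\<phi> x - \<phi> u - ereal (inner v (x - u))) / ereal (norm (x - u))) (at u)"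
      unfolding eventually_at
    proof (intro exI[of _ "min \<rho> (e / (L + 1))"] conjI ballI impI)
      show "0 < min \<rho> (e / (L + 1))" using assms e by auto
      fix x assume x: "x \<noteq> u \<and> dist x u < min \<rho> (e / (L + 1))"
      define n where "n = norm (x - u)"
      have n: "n > 0" "(L + 1) * n < e" using x \<open>L \<ge> 0\<close> by (auto simp: n_def dist_norm field_simps)
      have "L * n < e" using n by (smt (verit) mult_right_mono)
      have ge: "\<phi> x \<ge> ereal (c + inner v (x - u) - L * n\<^sup>2)" using minorant x by (auto simp: n_def)
      show "y < (\<phi> x - \<phi> u - ereal (inner v (x - u))) / ereal (norm (x - u))"
      proof (cases "\<phi> x")
        case (real b)
        have "(b - c - inner v (x - u)) / n \<ge> - L * n"
          using ge real n by (simp add: field_simps power2_eq_square)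
        then have "ereal (- e) < ereal ((b - c - inner v (x - u)) / n)"
          using \<open>L * n < e\<close> by simp
        with e(2) have "y < ereal ((b - c - inner v (x - u)) / n)" by (rule less_trans)
        then show ?thesis using real fin n by (simp add: n_def)
      qed (use \<open>y < 0\<close> ge fin n in \<open>auto simp: n_def\<close>)
    qed
  qed
  then show ?thesis using fin by (simp add: regular_subdiff_def)
qed

lemma regular_subdiff_subset_lim_subdiff: "regular_subdiff \<phi> u \<subseteq> lim_subdiff \<phi> u"
proof
  fix v assume v: "v \<in> regular_subdiff \<phi> u"
  then have "\<bar>\<phi> u\<bar> \<noteq> \<infinity>" by (simp add: regular_subdiff_def)
  with v show "v \<in> lim_subdiff \<phi> u"
    unfolding lim_subdiff_def by (intro CollectI conjI exI[of _ "\<lambda>_. u"] exI[of _ "\<lambda>_. v"]) auto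
qed

lemma zero_regular_subdiff_if_local_minimizer:
  assumes "\<phi> xb = ereal c" and "local_minimizer \<phi> xb"
  shows "0 \<in> regular_subdiff \<phi> xb"
proof -
  obtain r where "r > 0" "\<And>x. dist x xb < r \<Longrightarrow> \<phi> xb \<le> \<phi> x"
    using assms(2) unfolding local_minimizer_def by blast
  with assms(1) show ?thesis
    by (intro regular_subdiff_if_quadratic_minorant[where L = 0]) auto
qed

lemma norm_diff_squared_difference:
  fixes x u y :: "'a::real_inner"
  shows "lam/2 * (norm (u - y))\<^sup>2 - lam/2 * (norm (x - y))\<^sup>2
        = inner (lam *\<^sub>R (y - u)) (x - u) - lam/2 * (norm (x - u))\<^sup>2"
proof -
  have "(norm (x - y))\<^sup>2 = (norm ((x - u) + (u - y)))\<^sup>2" by simp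
  also have "\<dots> = (norm (x - u))\<^sup>2 + 2 * inner (x - u) (u - y) + (norm (u - y))\<^sup>2"
    unfolding power2_norm_eq_inner inner_add_left inner_add_right
    by (simp add: inner_commute[of "u - y" "x - u"])
  finally have expand: "(norm (x - y))\<^sup>2 = (norm (x - u))\<^sup>2 + 2 * inner (x - u) (u - y) + (norm (u - y))\<^sup>2" .
  have "inner (lam *\<^sub>R (y - u)) (x - u) = lam * inner (- (u - y)) (x - u)" by simp
  also have "\<dots> = - lam * inner (x - u) (u - y)"
    by (simp only: inner_minus_left inner_commute[of "u - y" "x - u"] mult_minus_left mult_minus_right)
  finally show ?thesis unfolding expand by (simp add: algebra_simps)
qed

lemma regular_subdiff_if_prox_minimizer:
  fixes \<phi> :: "'a::real_inner \<Rightarrow> ereal"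
  assumes "\<phi> u = ereal c" and "r > 0" and "lam \<ge> 0"
    and minimizer: "\<And>x. dist x u < r \<Longrightarrow>
      \<phi> x \<ge> ereal (c + lam/2 * (norm (u - y))\<^sup>2 - lam/2 * (norm (x - y))\<^sup>2)"
  shows "lam *\<^sub>R (y - u) \<in> regular_subdiff \<phi> u"
proof (rule regular_subdiff_if_quadratic_minorant[where L = "lam / 2" and \<phi> = \<phi> and u = u and c = c, OF assms(1,2)])
  fix x assume "dist x u < r"
  have "c + inner (lam *\<^sub>R (y - u)) (x - u) - lam / 2 * (norm (x - u))\<^sup>2
      = c + lam/2 * (norm (u - y))\<^sup>2 - lam/2 * (norm (x - y))\<^sup>2"
    using norm_diff_squared_difference[of lam u y x] by linarith
  then show "\<phi> x \<ge> ereal (c + inner (lam *\<^sub>R (y - u)) (x - u) - lam / 2 * (norm (x - u))\<^sup>2)"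
    using minimizer[OF \<open>dist x u < r\<close>] by (simp only:)
qed (use assms in simp)

text \<open>The lower bound \<open>\<phi> \<ge> \<phi> x\<^sub>0\<close> and the closed local epigraph make the
  sublevel set of \<open>\<phi> + \<lambda>/2 \<parallel>\<cdot> - y\<parallel>\<^sup>2\<close> over \<open>cball x\<^sub>0 \<rho>\<close> compact; the condition on
  \<open>\<parallel>x\<^sub>0 - y\<parallel>\<close> ensures that cutting the epigraph at height \<open>\<phi> x\<^sub>0 + \<epsilon>\<close> loses no minimiser.\<close>
lemma exists_local_prox_minimizer:
  fixes \<phi> :: "'a::euclidean_space \<Rightarrow> ereal"
  assumes f0: "\<phi> xb = ereal f0"
    and lower: "\<And>x. dist xb x \<le> \<rho> \<Longrightarrow> \<phi> xb \<le> \<phi> x"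
    and epi_closed: "closed {(x, \<alpha>::real). dist x xb \<le> \<epsilon> \<and> \<alpha> \<le> f0 + \<epsilon> \<and> \<phi> x \<le> ereal \<alpha>}"
    and "0 \<le> \<rho>" "\<rho> \<le> \<epsilon>" "lam > 0"
    and near: "lam/2 * (norm (xb - y))\<^sup>2 \<le> \<epsilon>"
  obtains u c where "\<phi> u = ereal c" "norm (u - y) \<le> norm (xb - y)"
    "\<And>x. dist xb x \<le> \<rho> \<Longrightarrow> \<phi> x \<ge> ereal (c + lam/2 * (norm (u - y))\<^sup>2 - lam/2 * (norm (x - y))\<^sup>2)"
proof -
  define q where "q x = lam/2 * (norm (x - y))\<^sup>2" for x
  define C where "C = {(x, \<alpha>). dist x xb \<le> \<epsilon> \<and> \<alpha> \<le> f0 + \<epsilon> \<and> \<phi> x \<le> ereal \<alpha>}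
      \<inter> (cball xb \<rho> \<times> {f0..f0 + \<epsilon>})"
  have "compact C" unfolding C_def using epi_closed
    by (intro closed_Int_compact compact_Times compact_cball compact_Icc)
  moreover have xbC: "(xb, f0) \<in> C" using assms by (simp add: C_def)
  moreover have "continuous_on C (\<lambda>p. snd p + q (fst p))" unfolding q_def by (intro continuous_intros)
  ultimately obtain u a0 where uC: "(u, a0) \<in> C"
    and argmin: "\<And>p. p \<in> C \<Longrightarrow> a0 + q u \<le> snd p + q (fst p)"
    using continuous_attains_inf[of C] by fastforce
  have "\<phi> u \<ge> ereal f0" using lower[of u] uC f0 by (simp add: C_def dist_commute)
  then obtain b0 where b0: "\<phi> u = ereal b0" "f0 \<le> b0" "b0 \<le> a0"
    using uC by (cases "\<phi> u") (auto simp: C_def)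
  have "(u, b0) \<in> C" using uC b0 by (auto simp: C_def)
  from argmin[OF this] have phi_u: "\<phi> u = ereal a0" using b0 by simp
  have at_xb: "a0 + q u \<le> f0 + q xb" using argmin[OF xbC] by simp
  then have "q u \<le> q xb" using b0 by simp
  then have "(norm (u - y))\<^sup>2 \<le> (norm (xb - y))\<^sup>2" using \<open>lam > 0\<close> by (simp add: q_def)
  then have "norm (u - y) \<le> norm (xb - y)" by (rule power2_le_imp_le) simp
  moreover have "\<phi> x \<ge> ereal (a0 + q u - q x)" if x: "dist xb x \<le> \<rho>" for x
  proof (cases "\<phi> x")
    case (real b)
    have "b \<ge> f0" using lower[OF x] real f0 by simp
    show ?thesis
    proof (cases "b \<le> f0 + \<epsilon>")
      case True
      then have "(x, b) \<in> C" using x \<open>b \<ge> f0\<close> \<open>\<rho> \<le> \<epsilon>\<close> real by (auto simp: C_def dist_commute)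
      from argmin[OF this] show ?thesis using real by simp
    next
      case False
      have "q x \<ge> 0" using \<open>lam > 0\<close> by (simp add: q_def)
      then show ?thesis using at_xb near False real by (simp add: q_def)
    qed
  qed (use lower[OF x] f0 in auto)
  ultimately show thesis using that[OF phi_u] by (simp add: q_def)
qed

lemma prox_subgradients_near_local_minimizer:
  fixes \<phi> :: "'a::euclidean_space \<Rightarrow> ereal"
  assumes "\<phi> xb = ereal f0" and "local_minimizer \<phi> xb" and "locally_lsc_at \<phi> xb" and "lam > 0"
  obtains \<delta> where "\<delta> > 0" "\<And>y. norm (y - xb) < \<delta> \<Longrightarrow>
    \<exists>u. norm (u - y) \<le> norm (y - xb) \<and> lam *\<^sub>R (y - u) \<in> regular_subdiff \<phi> u"
proof -
  obtain r where r: "r > 0" "\<And>x. dist x xb < r \<Longrightarrow> \<phi> xb \<le> \<phi> x"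
    using assms(2) unfolding local_minimizer_def by blast
  obtain \<epsilon> where "\<epsilon> > 0"
    and epi_closed: "closed {(x, \<alpha>::real). dist x xb \<le> \<epsilon> \<and> \<alpha> \<le> f0 + \<epsilon> \<and> \<phi> x \<le> ereal \<alpha>}"
    using assms(1,3) unfolding locally_lsc_at_def by auto
  define \<rho> where "\<rho> = min \<epsilon> (r / 2)"
  have \<rho>: "\<rho> > 0" "\<rho> \<le> \<epsilon>" "\<rho> < r" using \<open>\<epsilon> > 0\<close> r by (auto simp: \<rho>_def)
  define \<delta> where "\<delta> = min (\<rho> / 2) (min 1 (2 * \<epsilon> / lam))"
  have "\<delta> > 0" using \<rho> \<open>\<epsilon> > 0\<close> \<open>lam > 0\<close> by (simp add: \<delta>_def)
  moreover have "\<exists>u. norm (u - y) \<le> norm (y - xb) \<and> lam *\<^sub>R (y - u) \<in> regular_subdiff \<phi> u"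
    if y: "norm (y - xb) < \<delta>" for y
  proof -
    define a where "a = norm (xb - y)"
    have "a < 1" "a < 2 * \<epsilon> / lam" "2 * a < \<rho>"
      using y by (auto simp: a_def \<delta>_def norm_minus_commute)
    then have "a\<^sup>2 \<le> 2 * \<epsilon> / lam" by (smt (verit) a_def mult_left_le_one_le norm_ge_zero power2_eq_square)
    then have near: "lam/2 * (norm (xb - y))\<^sup>2 \<le> \<epsilon>" using \<open>lam > 0\<close> by (simp add: a_def field_simps)
    have lower: "\<And>x. dist xb x \<le> \<rho> \<Longrightarrow> \<phi> xb \<le> \<phi> x" using r(2) \<rho> by (simp add: dist_commute)
    obtain u c where u: "\<phi> u = ereal c" "norm (u - y) \<le> norm (xb - y)"
      and minimizer: "\<And>x. dist xb x \<le> \<rho> \<Longrightarrow>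
        \<phi> x \<ge> ereal (c + lam/2 * (norm (u - y))\<^sup>2 - lam/2 * (norm (x - y))\<^sup>2)"
      by (rule exists_local_prox_minimizer[OF assms(1) lower epi_closed _ \<rho>(2) \<open>lam > 0\<close> near])
        (use \<rho> in auto)
    have "dist u xb \<le> 2 * a"
      using u(2) norm_triangle_ineq[of "u - y" "y - xb"] by (simp add: dist_norm a_def norm_minus_commute)
    then have "dist xb x \<le> \<rho>" if "dist x u < \<rho> - 2 * a" for x
      using that dist_triangle[of xb x u] by (simp add: dist_commute)
    then have "lam *\<^sub>R (y - u) \<in> regular_subdiff \<phi> u"
      using \<open>2 * a < \<rho>\<close> \<open>lam > 0\<close> minimizer
      by (intro regular_subdiff_if_prox_minimizer[where \<phi> = \<phi> and c = c and r = "\<rho> - 2 * a", OF u(1)]) auto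
    with u(2) show ?thesis by (auto simp: a_def norm_minus_commute)
  qed
  ultimately show thesis using that by blast
qed

lemma regular_normal_cone_inner_le:
  assumes "v \<in> regular_normal_cone \<Omega> x" and "c > 0"
  obtains \<delta> where "\<delta> > 0" "\<And>p. p \<in> \<Omega> \<Longrightarrow> norm (p - x) < \<delta> \<Longrightarrow> inner v (p - x) \<le> c * norm (p - x)"
proof -
  have "x \<in> \<Omega>" using assms(1)
    by (auto simp: regular_normal_cone_def regular_subdiff_def indicator_fun_def split: if_splits)
  have "ereal (- c) < 0" using \<open>c > 0\<close> by simp
  with assms(1) have "eventually (\<lambda>p. ereal (- c) < (indicator_fun \<Omega> p - indicator_fun \<Omega> x
      - ereal (inner v (p - x))) / ereal (norm (p - x))) (at x)"
    by (simp add: regular_normal_cone_def regular_subdiff_def le_Liminf_iff)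
  then obtain \<delta> where "\<delta> > 0" and \<delta>: "\<And>p. p \<noteq> x \<Longrightarrow> dist p x < \<delta> \<Longrightarrow>
      ereal (- c) < (indicator_fun \<Omega> p - indicator_fun \<Omega> x
        - ereal (inner v (p - x))) / ereal (norm (p - x))"
    unfolding eventually_at by auto
  have "inner v (p - x) \<le> c * norm (p - x)" if "p \<in> \<Omega>" "norm (p - x) < \<delta>" for p
  proof (cases "p = x")
    case False
    then have "- c < - inner v (p - x) / norm (p - x)"
      using \<delta>[of p] that \<open>x \<in> \<Omega>\<close> by (simp add: indicator_fun_def dist_norm)
    then show ?thesis using False by (simp add: field_simps)
  qed simp
  with \<open>\<delta> > 0\<close> show thesis using that by blast
qed

lemma exists_scaleR_norm_add_less:
  fixes z w :: "'a::real_inner"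
  assumes "inner z w < 0"
  obtains lam where "lam > 0" "norm (z + lam *\<^sub>R w) < norm z"
proof -
  have "w \<noteq> 0" using assms by auto
  define lam where "lam = - inner z w / (norm w)\<^sup>2"
  have "lam > 0" using assms \<open>w \<noteq> 0\<close> by (simp add: lam_def divide_neg_pos)
  have "(norm (z + lam *\<^sub>R w))\<^sup>2 = (norm z)\<^sup>2 + 2 * lam * inner z w + lam\<^sup>2 * (norm w)\<^sup>2"
    unfolding power2_norm_eq_inner
    by (simp add: inner_add_left inner_add_right inner_commute[of w z] algebra_simps power2_eq_square)
  also have "\<dots> = (norm z)\<^sup>2 - (inner z w)\<^sup>2 / (norm w)\<^sup>2"
    using \<open>w \<noteq> 0\<close> by (simp add: lam_def field_simps power2_eq_square)
  also have "\<dots> < (norm z)\<^sup>2" using assms \<open>w \<noteq> 0\<close> by simp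
  finally show thesis using that \<open>lam > 0\<close> by (meson norm_ge_zero power_less_imp_less_base)
qed

lemma inner_perturbed_displacement_ge:
  fixes z w g :: "'a::real_inner"
  assumes "norm g \<le> t * norm z"
  shows "inner z (t *\<^sub>R z + g) - inner w (- lam *\<^sub>R g) \<ge> t * norm z * (norm z - norm (z + lam *\<^sub>R w))"
proof -
  have "inner z (t *\<^sub>R z + g) - inner w (- lam *\<^sub>R g) = t * (norm z)\<^sup>2 + inner (z + lam *\<^sub>R w) g"
    by (simp add: inner_add_left inner_add_right power2_norm_eq_inner)
  moreover have "\<bar>inner (z + lam *\<^sub>R w) g\<bar> \<le> norm (z + lam *\<^sub>R w) * (t * norm z)"
    using Cauchy_Schwarz_ineq2[of "z + lam *\<^sub>R w" g] mult_left_mono[OF assms norm_ge_zero]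
    by (rule order_trans)
  then have "inner (z + lam *\<^sub>R w) g \<ge> - (norm (z + lam *\<^sub>R w) * (t * norm z))"
    by (simp add: abs_le_iff)
  moreover have "t * norm z * (norm z - norm (z + lam *\<^sub>R w))
      = t * (norm z)\<^sup>2 - norm (z + lam *\<^sub>R w) * (t * norm z)"
    by (simp add: algebra_simps power2_eq_square)
  ultimately show ?thesis by linarith
qed

lemma lim_subdiff_graph_points_along:
  fixes \<phi> :: "'a::euclidean_space \<Rightarrow> ereal"
  assumes f0: "\<phi> xb = ereal f0" and locmin: "local_minimizer \<phi> xb"
    and lsc: "locally_lsc_at \<phi> xb" and "lam > 0" and "z \<noteq> 0"
  obtains \<delta> where "\<delta> > 0" "\<And>a. 0 < a \<Longrightarrow> a < \<delta> \<Longrightarrow> \<exists>u v. v \<in> lim_subdiff \<phi> u \<and>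
    norm (u - xb, v) \<le> (2 + lam) * a \<and>
    a * (norm z - norm (z + lam *\<^sub>R w)) \<le> inner (z, - w) (u - xb, v)"
proof -
  obtain \<delta> where "\<delta> > 0" and prox: "\<And>y. norm (y - xb) < \<delta> \<Longrightarrow>
      \<exists>u. norm (u - y) \<le> norm (y - xb) \<and> lam *\<^sub>R (y - u) \<in> regular_subdiff \<phi> u"
    using prox_subgradients_near_local_minimizer[OF f0 locmin lsc \<open>lam > 0\<close>] by blast
  have "\<exists>u v. v \<in> lim_subdiff \<phi> u \<and> norm (u - xb, v) \<le> (2 + lam) * a \<and>
      a * (norm z - norm (z + lam *\<^sub>R w)) \<le> inner (z, - w) (u - xb, v)"
    if "0 < a" "a < \<delta>" for a
  proof -
    define t where "t = a / norm z"
    have "t * norm z = a" using \<open>z \<noteq> 0\<close> by (simp add: t_def)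
    define y where "y = xb + t *\<^sub>R z"
    have "norm (y - xb) = a" using \<open>t * norm z = a\<close> \<open>0 < a\<close> by (simp add: y_def abs_mult t_def)
    then obtain u where u: "norm (u - y) \<le> a" and "lam *\<^sub>R (y - u) \<in> regular_subdiff \<phi> u"
      using prox \<open>a < \<delta>\<close> by auto
    then have "- lam *\<^sub>R (u - y) \<in> lim_subdiff \<phi> u"
      using regular_subdiff_subset_lim_subdiff by (fastforce simp: algebra_simps)
    moreover have "norm (u - xb, - lam *\<^sub>R (u - y)) \<le> (2 + lam) * a"
    proof -
      have "norm (u - xb) \<le> 2 * a"
        using u norm_triangle_ineq[of "u - y" "y - xb"] \<open>norm (y - xb) = a\<close> by simp
      moreover have "norm (lam *\<^sub>R (u - y)) \<le> lam * a"
        using mult_left_mono[OF u, of lam] \<open>lam > 0\<close> by simp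
      moreover have "norm (u - xb, - lam *\<^sub>R (u - y)) \<le> norm (u - xb) + norm (lam *\<^sub>R (u - y))"
        using norm_Pair_le[of "u - xb" "- lam *\<^sub>R (u - y)"] by simp
      ultimately show ?thesis by (simp add: algebra_simps)
    qed
    moreover have "a * (norm z - norm (z + lam *\<^sub>R w)) \<le> inner (z, - w) (u - xb, - lam *\<^sub>R (u - y))"
      using inner_perturbed_displacement_ge[where g = "u - y" and t = t and z = z and w = w and lam = lam]
        u \<open>t * norm z = a\<close> by (simp add: y_def algebra_simps)
    ultimately show ?thesis by blast
  qed
  with \<open>\<delta> > 0\<close> show thesis using that by blast
qed

lemma combined_second_subdiff_inner_nonneg:
  fixes \<phi> :: "'a::euclidean_space \<Rightarrow> ereal"
  assumes f0: "\<phi> xb = ereal f0" and locmin: "local_minimizer \<phi> xb"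
    and lsc: "locally_lsc_at \<phi> xb" and z: "z \<in> combined_second_subdiff \<phi> xb 0 w"
  shows "inner z w \<ge> 0"
proof (rule ccontr)
  assume "\<not> inner z w \<ge> 0"
  then obtain lam where "lam > 0" and shrink: "norm (z + lam *\<^sub>R w) < norm z"
    using exists_scaleR_norm_add_less[of z w] by force
  then have "z \<noteq> 0" using norm_ge_zero[of "z + lam *\<^sub>R w"] by (metis norm_zero not_less)
  define s where "s = norm z - norm (z + lam *\<^sub>R w)"
  have "s > 0" using shrink by (simp add: s_def)
  define G where "G = graph_of (lim_subdiff \<phi>)"
  have "(z, - w) \<in> regular_normal_cone G (xb, 0)"
    using z by (simp add: combined_second_subdiff_def regular_coderiv_def G_def)
  then obtain \<delta> where "\<delta> > 0" and normal: "\<And>p. p \<in> G \<Longrightarrow> norm (p - (xb, 0)) < \<delta> \<Longrightarrow>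
      inner (z, - w) (p - (xb, 0)) \<le> s / (2 * (2 + lam)) * norm (p - (xb, 0))"
    using regular_normal_cone_inner_le[of "(z, - w)" G "(xb, 0)" "s / (2 * (2 + lam))"]
      \<open>s > 0\<close> \<open>lam > 0\<close> by auto
  obtain \<delta>' where "\<delta>' > 0" and graph_points: "\<And>a. 0 < a \<Longrightarrow> a < \<delta>' \<Longrightarrow>
      \<exists>u v. v \<in> lim_subdiff \<phi> u \<and> norm (u - xb, v) \<le> (2 + lam) * a \<and>
        a * s \<le> inner (z, - w) (u - xb, v)"
    using lim_subdiff_graph_points_along[OF f0 locmin lsc \<open>lam > 0\<close> \<open>z \<noteq> 0\<close>, of w]
    unfolding s_def by blast
  define a where "a = min (\<delta>' / 2) (\<delta> / (2 * (2 + lam)))"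
  have "a > 0" "a < \<delta>'" using \<open>\<delta> > 0\<close> \<open>\<delta>' > 0\<close> \<open>lam > 0\<close> by (auto simp: a_def)
  have "a \<le> \<delta> / (2 * (2 + lam))" by (simp add: a_def)
  then have "(2 + lam) * a < \<delta>" using \<open>\<delta> > 0\<close> \<open>lam > 0\<close> by (simp add: field_simps)
  obtain u v where "(u, v) \<in> G" and small: "norm (u - xb, v) \<le> (2 + lam) * a"
    and large: "a * s \<le> inner (z, - w) (u - xb, v)"
    using graph_points[OF \<open>a > 0\<close> \<open>a < \<delta>'\<close>] by (auto simp: G_def graph_of_def)
  note large
  also have "inner (z, - w) (u - xb, v) \<le> s / (2 * (2 + lam)) * norm (u - xb, v)"
    using normal[OF \<open>(u, v) \<in> G\<close>] small \<open>(2 + lam) * a < \<delta>\<close> by simp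
  also have "\<dots> \<le> s / (2 * (2 + lam)) * ((2 + lam) * a)"
    using small \<open>s > 0\<close> \<open>lam > 0\<close> by (intro mult_left_mono) auto
  also have "\<dots> = a * s / 2" using \<open>lam > 0\<close> by (simp add: field_simps)
  finally show False using \<open>a > 0\<close> \<open>s > 0\<close> by simp
qed

theorem theorem4p3:
  fixes \<phi> :: "'a::euclidean_space \<Rightarrow> ereal" and xb :: 'a
  assumes no_minus_inf: "\<And>x. \<phi> x \<noteq> -\<infinity>"
    and dom: "xb \<in> edom \<phi>"
    and locmin: "local_minimizer \<phi> xb"
  shows "0 \<in> lim_subdiff \<phi> xb \<and>
    (prox_regular_at \<phi> xb 0 \<longrightarrow>
      (\<forall>w z. z \<in> combined_second_subdiff \<phi> xb 0 w \<longrightarrow> inner z w \<ge> 0))"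
proof -
  obtain f0 where f0: "\<phi> xb = ereal f0"
    using dom no_minus_inf[of xb] unfolding edom_def by (cases "\<phi> xb") auto
  have "0 \<in> lim_subdiff \<phi> xb"
    using zero_regular_subdiff_if_local_minimizer[OF f0 locmin] regular_subdiff_subset_lim_subdiff by blast
  moreover have "inner z w \<ge> 0"
    if "prox_regular_at \<phi> xb 0" "z \<in> combined_second_subdiff \<phi> xb 0 w" for z w
    using combined_second_subdiff_inner_nonneg[OF f0 locmin _ that(2)] that(1)
    by (simp add: prox_regular_at_def)
  ultimately show ?thesis by blast
qed

end
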